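(* Let $\mathcal{C}$ be a category with finite products that has an exponentiable parametrised natural numbers object $N$. (1) A midpoint object $(A,m)$ in $\mathcal{C}$ is iterative if and only if there exists a map $M\colon A^N\to A$ satisfying (Unfolding) $M_i\,x_i = m(x_0, M_i\,x_{i+1})$, and (Canonicity) whenever $(x_i)$ and $(y_i)$ are sequences with $y_i=m(x_i,y_{i+1})$ for all $i$, then $y_0=M_i\,x_i$. Moreover, if $(A,m)$ is iterative then there is a unique map $M\colon A^N\to A$ satisfying Unfolding. (2) If $(A,m)$ and $(A',m')$ are iterative midpoint objects with associated maps $M, M'$ (the unique ones satisfying Unfolding), then every midpoint homomorphism $f\colon A\to A'$ satisfies $f(M_i\,x_i)=M'_i\,f(x_i)$ for all sequences $(x_i)$.
   Context: All equations are between generalised elements (maps into the object from an arbitrary object $Z$); sequences $(x_i)$ of generalised elements of $A$ mean generalised elements of $A^N$, and $M_i\,x_i$ denotes $M((x_i))$. A parametrised natural numbers object is an object $N$ with $0\colon 1\to N$, $s\colon N\to N$ such that for all objects $P,X$ and maps $a\colon P\to X$, $f\colon P\times X\to X$ there is a unique $g\colon P\times N\to X$ with $g(p,0)=a(p)$, $g(p,n+1)=f(p,g(p,n))$. A midpoint object is a pair $(A,m)$ with $m\colon A\times A\to A$ satisfying idempotency $m(x,x)=x$, commutativity $m(x,y)=m(y,x)$ and transposition $m(m(x,y),m(z,w))=m(m(x,z),m(y,w))$. A homomorphism of midpoint objects is a map $h$ with $h(m(x,y))=m'(h(x),h(y))$. $(A,m)$ is iterative if for every map $c\colon X\to A\times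 X$ there is a unique map $u\colon X\to A$ with $m\circ(\mathrm{id}_A\times u)\circ c = u$. *)

theory Defs
  imports Main
begin

text \<open>A category (objects of type 'o, arrows of type 'a) equipped with chosen finite
products (terminal object + binary products), a chosen parametrised natural numbers
object Nat with Zero, Succ, and chosen exponentials Exp A = A^Nat with evaluation Ev A.\<close>

record ('o, 'a) ccat =
  Dom  :: "'a \<Rightarrow> 'o"
  Cod  :: "'a \<Rightarrow> 'o"
  Comp :: "'a \<Rightarrow> 'a \<Rightarrow> 'a"   (* Comp g f = g o f *)
  Id   :: "'o \<Rightarrow> 'a"
  Trm  :: "'o"
  Bang :: "'o \<Rightarrow> 'a"
  Prod :: "'o \<Rightarrow> 'o \<Rightarrow> 'o"
  Pi1  :: "'o \<Rightarrow> 'o \<Rightarrow> 'a"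
  Pi2  :: "'o \<Rightarrow> 'o \<Rightarrow> 'a"
  Pair :: "'a \<Rightarrow> 'a \<Rightarrow> 'a"
  Nat  :: "'o"
  Zero :: "'a"
  Succ :: "'a"
  Exp  :: "'o \<Rightarrow> 'o"
  Ev   :: "'o \<Rightarrow> 'a"

definition hom :: "('o, 'a, 'r) ccat_scheme \<Rightarrow> 'o \<Rightarrow> 'o \<Rightarrow> 'a set" where
  "hom C X Y = {f. Dom C f = X \<and> Cod C f = Y}"

definition is_category :: "('o, 'a, 'r) ccat_scheme \<Rightarrow> bool" where
  "is_category C \<longleftrightarrow>
     (\<forall>X. Id C X \<in> hom C X X) \<and>
     (\<forall>X Y Z f g. f \<in> hom C X Y \<longrightarrow> g \<in> hom C Y Z \<longrightarrow> Comp C g f \<in> hom C X Z) \<and>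
     (\<forall>X Y f. f \<in> hom C X Y \<longrightarrow> Comp C f (Id C X) = f \<and> Comp C (Id C Y) f = f) \<and>
     (\<forall>W X Y Z f g h. f \<in> hom C W X \<longrightarrow> g \<in> hom C X Y \<longrightarrow> h \<in> hom C Y Z \<longrightarrow>
        Comp C h (Comp C g f) = Comp C (Comp C h g) f)"

definition has_finite_products :: "('o, 'a, 'r) ccat_scheme \<Rightarrow> bool" where
  "has_finite_products C \<longleftrightarrow>
     (\<forall>X. Bang C X \<in> hom C X (Trm C) \<and> (\<forall>f \<in> hom C X (Trm C). f = Bang C X)) \<and>
     (\<forall>X Y. Pi1 C X Y \<in> hom C (Prod C X Y) X \<and> Pi2 C X Y \<in> hom C (Prod C X Y) Y \<and>
        (\<forall>Z f g. f \<in> hom C Z X \<longrightarrow> g \<in> hom C Z Y \<longrightarrow>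
           Pair C f g \<in> hom C Z (Prod C X Y) \<and>
           Comp C (Pi1 C X Y) (Pair C f g) = f \<and> Comp C (Pi2 C X Y) (Pair C f g) = g) \<and>
        (\<forall>Z h. h \<in> hom C Z (Prod C X Y) \<longrightarrow>
           Pair C (Comp C (Pi1 C X Y) h) (Comp C (Pi2 C X Y) h) = h))"

definition cross :: "('o, 'a, 'r) ccat_scheme \<Rightarrow> 'o \<Rightarrow> 'o \<Rightarrow> 'a \<Rightarrow> 'a \<Rightarrow> 'a" where
  "cross C X Y f g = Pair C (Comp C f (Pi1 C X Y)) (Comp C g (Pi2 C X Y))"

definition is_pnno :: "('o, 'a, 'r) ccat_scheme \<Rightarrow> bool" where
  "is_pnno C \<longleftrightarrow>
     Zero C \<in> hom C (Trm C) (Nat C) \<and> Succ C \<in> hom C (Nat C) (Nat C) \<and>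
     (\<forall>P X a f. a \<in> hom C P X \<longrightarrow> f \<in> hom C (Prod C P X) X \<longrightarrow>
        (\<exists>!g. g \<in> hom C (Prod C P (Nat C)) X \<and>
           (\<forall>W p. p \<in> hom C W P \<longrightarrow>
              Comp C g (Pair C p (Comp C (Zero C) (Bang C W))) = Comp C a p) \<and>
           (\<forall>W p n. p \<in> hom C W P \<longrightarrow> n \<in> hom C W (Nat C) \<longrightarrow>
              Comp C g (Pair C p (Comp C (Succ C) n)) = Comp C f (Pair C p (Comp C g (Pair C p n))))))"

definition nno_exponentiable :: "('o, 'a, 'r) ccat_scheme \<Rightarrow> bool" where
  "nno_exponentiable C \<longleftrightarrow>
     (\<forall>A. Ev C A \<in> hom C (Prod C (Exp C A) (Nat C)) A \<and>
        (\<forall>Z g. g \<in> hom C (Prod C Z (Nat C)) A \<longrightarrow>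
           (\<exists>!h. h \<in> hom C Z (Exp C A) \<and>
              Comp C (Ev C A) (cross C Z (Nat C) h (Id C (Nat C))) = g)))"

definition cat_with_exp_pnno :: "('o, 'a, 'r) ccat_scheme \<Rightarrow> bool" where
  "cat_with_exp_pnno C \<longleftrightarrow> is_category C \<and> has_finite_products C \<and> is_pnno C \<and> nno_exponentiable C"

definition curryN :: "('o, 'a, 'r) ccat_scheme \<Rightarrow> 'o \<Rightarrow> 'o \<Rightarrow> 'a \<Rightarrow> 'a" where
  "curryN C Z A g = (THE h. h \<in> hom C Z (Exp C A) \<and>
       Comp C (Ev C A) (cross C Z (Nat C) h (Id C (Nat C))) = g)"

text \<open>x_i for a sequence x : W \<rightarrow> A^N and an index i : W \<rightarrow> N.\<close>
definition seq_at :: "('o, 'a, 'r) ccat_scheme \<Rightarrow> 'o \<Rightarrow> 'a \<Rightarrow> 'a \<Rightarrow> 'a" where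
  "seq_at C A x i = Comp C (Ev C A) (Pair C x i)"

definition shift :: "('o, 'a, 'r) ccat_scheme \<Rightarrow> 'o \<Rightarrow> 'o \<Rightarrow> 'a \<Rightarrow> 'a" where
  "shift C Z A x = curryN C Z A (Comp C (Ev C A) (cross C Z (Nat C) x (Succ C)))"

definition map_seq :: "('o, 'a, 'r) ccat_scheme \<Rightarrow> 'o \<Rightarrow> 'o \<Rightarrow> 'o \<Rightarrow> 'a \<Rightarrow> 'a \<Rightarrow> 'a" where
  "map_seq C Z A A' f x =
     curryN C Z A' (Comp C f (Comp C (Ev C A) (cross C Z (Nat C) x (Id C (Nat C)))))"

definition midpoint_obj :: "('o, 'a, 'r) ccat_scheme \<Rightarrow> 'o \<Rightarrow> 'a \<Rightarrow> bool" where
  "midpoint_obj C A m \<longleftrightarrow> m \<in> hom C (Prod C A A) A \<and>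
     (\<forall>Z x. x \<in> hom C Z A \<longrightarrow> Comp C m (Pair C x x) = x) \<and>
     (\<forall>Z x y. x \<in> hom C Z A \<longrightarrow> y \<in> hom C Z A \<longrightarrow> Comp C m (Pair C x y) = Comp C m (Pair C y x)) \<and>
     (\<forall>Z x y z w. x \<in> hom C Z A \<longrightarrow> y \<in> hom C Z A \<longrightarrow> z \<in> hom C Z A \<longrightarrow> w \<in> hom C Z A \<longrightarrow>
        Comp C m (Pair C (Comp C m (Pair C x y)) (Comp C m (Pair C z w))) =
        Comp C m (Pair C (Comp C m (Pair C x z)) (Comp C m (Pair C y w))))"

definition midpoint_hom :: "('o, 'a, 'r) ccat_scheme \<Rightarrow> 'o \<Rightarrow> 'a \<Rightarrow> 'o \<Rightarrow> 'a \<Rightarrow> 'a \<Rightarrow> bool" where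
  "midpoint_hom C A m A' m' h \<longleftrightarrow> h \<in> hom C A A' \<and>
     (\<forall>Z x y. x \<in> hom C Z A \<longrightarrow> y \<in> hom C Z A \<longrightarrow>
        Comp C h (Comp C m (Pair C x y)) = Comp C m' (Pair C (Comp C h x) (Comp C h y)))"

definition iterative :: "('o, 'a, 'r) ccat_scheme \<Rightarrow> 'o \<Rightarrow> 'a \<Rightarrow> bool" where
  "iterative C A m \<longleftrightarrow>
     (\<forall>X c. c \<in> hom C X (Prod C A X) \<longrightarrow>
        (\<exists>!u. u \<in> hom C X A \<and> Comp C m (Comp C (cross C A X (Id C A) u) c) = u))"

definition unfolding_law :: "('o, 'a, 'r) ccat_scheme \<Rightarrow> 'o \<Rightarrow> 'a \<Rightarrow> 'a \<Rightarrow> bool" where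
  "unfolding_law C A m M \<longleftrightarrow>
     (\<forall>Z x. x \<in> hom C Z (Exp C A) \<longrightarrow>
        Comp C M x = Comp C m (Pair C (seq_at C A x (Comp C (Zero C) (Bang C Z))) (Comp C M (shift C Z A x))))"

definition canonicity :: "('o, 'a, 'r) ccat_scheme \<Rightarrow> 'o \<Rightarrow> 'a \<Rightarrow> 'a \<Rightarrow> bool" where
  "canonicity C A m M \<longleftrightarrow>
     (\<forall>Z x y. x \<in> hom C Z (Exp C A) \<longrightarrow> y \<in> hom C Z (Exp C A) \<longrightarrow>
        (\<forall>W w i. w \<in> hom C W Z \<longrightarrow> i \<in> hom C W (Nat C) \<longrightarrow>
           seq_at C A (Comp C y w) i =
           Comp C m (Pair C (seq_at C A (Comp C x w) i) (seq_at C A (Comp C y w) (Comp C (Succ C) i)))) \<longrightarrow>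
        seq_at C A y (Comp C (Zero C) (Bang C Z)) = Comp C M x)"

end

theory Submission
  imports Defs
begin

text \<open>
  A sequence in A is a generalised element of A^N, and A^N carries the coalgebra
  \<langle>head, tail\<rangle> : A^N \<rightarrow> A \<times> A^N. The Unfolding law says precisely that M solves the
  iteration equation u = m \<circ> (id \<times> u) \<circ> \<langle>head, tail\<rangle>, so iterativity yields a unique such M.
  Conversely every coalgebra \<langle>c1, c2\<rangle> on X maps into A^N by p \<mapsto> (c1 (c2^i p))_i, which turns M
  into a solution for \<langle>c1, c2\<rangle>; Canonicity, applied to the sequence (u (c2^i p))_i of any other
  solution u, makes it unique. Canonicity in turn follows from iterativity on Z \<times> N, where
  (z, n) \<mapsto> y_n z and M applied to the suffixes of x solve the same equation. A homomorphism f
  commutes with M because f \<circ> M and M' \<circ> f^N both solve the equation for \<langle>f \<circ> head, tail\<rangle>.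
\<close>

locale exp_pnno_category =
  fixes C :: "('o, 'a) ccat"
  assumes axioms: "cat_with_exp_pnno C"
begin

abbreviation comp (infixr "\<cdot>" 55) where "g \<cdot> f \<equiv> Comp C g f"
abbreviation dm where "dm \<equiv> Dom C"
abbreviation cd where "cd \<equiv> Cod C"
abbreviation N where "N \<equiv> Nat C"
abbreviation zero where "zero W \<equiv> Zero C \<cdot> Bang C W"

lemma category: "is_category C" and finite_products: "has_finite_products C"
  and pnno: "is_pnno C" and exponentiable: "nno_exponentiable C"
  using axioms by (auto simp: cat_with_exp_pnno_def)

lemma dom_comp [simp]: "cd f = dm g \<Longrightarrow> dm (g \<cdot> f) = dm f"
  and cod_comp [simp]: "cd f = dm g \<Longrightarrow> cd (g \<cdot> f) = cd g"
  using category unfolding is_category_def hom_def by blast+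

lemma id_typ [simp]: "dm (Id C X) = X" "cd (Id C X) = X"
  using category unfolding is_category_def hom_def by auto

lemma comp_id_right [simp]: "dm f = X \<Longrightarrow> f \<cdot> Id C X = f"
  and comp_id_left [simp]: "cd f = X \<Longrightarrow> Id C X \<cdot> f = f"
  using category unfolding is_category_def hom_def by blast+

lemma comp_assoc [simp]:
  assumes "cd f = dm g" "cd g = dm h"
  shows "(h \<cdot> g) \<cdot> f = h \<cdot> (g \<cdot> f)"
proof -
  have "\<forall>W X Y Z f g h. f \<in> hom C W X \<longrightarrow> g \<in> hom C X Y \<longrightarrow> h \<in> hom C Y Z \<longrightarrow>
      h \<cdot> (g \<cdot> f) = (h \<cdot> g) \<cdot> f"
    using category unfolding is_category_def by blast
  then show ?thesis using assms unfolding hom_def by force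
qed

lemma bang_typ [simp]: "dm (Bang C X) = X" "cd (Bang C X) = Trm C"
  using finite_products unfolding has_finite_products_def hom_def by auto

lemma bang_unique: "cd f = Trm C \<Longrightarrow> f = Bang C (dm f)"
  using finite_products unfolding has_finite_products_def hom_def by auto

lemma bang_comp [simp]: "cd h = Y \<Longrightarrow> Bang C Y \<cdot> h = Bang C (dm h)"
  using bang_unique[of "Bang C Y \<cdot> h"] by simp

lemma proj_typ [simp]:
  "dm (Pi1 C X Y) = Prod C X Y" "cd (Pi1 C X Y) = X"
  "dm (Pi2 C X Y) = Prod C X Y" "cd (Pi2 C X Y) = Y"
  using finite_products unfolding has_finite_products_def hom_def by auto

lemma pair_typ:
  assumes "dm f = dm g"
  shows "dm (Pair C f g) = dm f \<and> cd (Pair C f g) = Prod C (cd f) (cd g)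
    \<and> Pi1 C (cd f) (cd g) \<cdot> Pair C f g = f \<and> Pi2 C (cd f) (cd g) \<cdot> Pair C f g = g"
proof -
  have "\<forall>X Y Z f g. f \<in> hom C Z X \<longrightarrow> g \<in> hom C Z Y \<longrightarrow>
      Pair C f g \<in> hom C Z (Prod C X Y) \<and> Pi1 C X Y \<cdot> Pair C f g = f \<and> Pi2 C X Y \<cdot> Pair C f g = g"
    using finite_products unfolding has_finite_products_def by blast
  then show ?thesis using assms unfolding hom_def by force
qed

lemma dom_pair [simp]: "dm f = dm g \<Longrightarrow> dm (Pair C f g) = dm f"
  and cod_pair [simp]: "dm f = dm g \<Longrightarrow> cd (Pair C f g) = Prod C (cd f) (cd g)"
  and pi1_pair [simp]: "dm f = dm g \<Longrightarrow> cd f = X \<Longrightarrow> cd g = Y \<Longrightarrow> Pi1 C X Y \<cdot> Pair C f g = f"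
  and pi2_pair [simp]: "dm f = dm g \<Longrightarrow> cd f = X \<Longrightarrow> cd g = Y \<Longrightarrow> Pi2 C X Y \<cdot> Pair C f g = g"
  using pair_typ by blast+

lemma pair_eta: "cd h = Prod C X Y \<Longrightarrow> Pair C (Pi1 C X Y \<cdot> h) (Pi2 C X Y \<cdot> h) = h"
  using finite_products unfolding has_finite_products_def hom_def by blast

lemma pair_comp [simp]:
  assumes "dm f = dm g" "cd h = dm f"
  shows "Pair C f g \<cdot> h = Pair C (f \<cdot> h) (g \<cdot> h)"
  using pair_eta[of "Pair C f g \<cdot> h" "cd f" "cd g"] assms
    comp_assoc[of h "Pair C f g" "Pi1 C (cd f) (cd g)"] comp_assoc[of h "Pair C f g" "Pi2 C (cd f) (cd g)"]
  by simp

lemma cross_typ [simp]: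
  "dm f = X \<Longrightarrow> dm g = Y \<Longrightarrow> dm (cross C X Y f g) = Prod C X Y"
  "dm f = X \<Longrightarrow> dm g = Y \<Longrightarrow> cd (cross C X Y f g) = Prod C (cd f) (cd g)"
  by (simp_all add: cross_def)

lemma cross_pair [simp]: "dm f = X \<Longrightarrow> dm g = Y \<Longrightarrow> dm a = dm b \<Longrightarrow> cd a = X \<Longrightarrow> cd b = Y \<Longrightarrow>
    cross C X Y f g \<cdot> Pair C a b = Pair C (f \<cdot> a) (g \<cdot> b)"
  by (simp add: cross_def)

lemma zero_typ [simp]: "dm (Zero C) = Trm C" "cd (Zero C) = N"
  and succ_typ [simp]: "dm (Succ C) = N" "cd (Succ C) = N"
  using pnno unfolding is_pnno_def hom_def by auto

lemma ev_typ [simp]: "dm (Ev C A) = Prod C (Exp C A) N" "cd (Ev C A) = A"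
  using exponentiable unfolding nno_exponentiable_def hom_def by auto

subsection \<open>Sequences\<close>

lemma curryN_ex1:
  assumes "dm g = Prod C Z N" "cd g = A"
  shows "\<exists>!h. h \<in> hom C Z (Exp C A) \<and> Ev C A \<cdot> cross C Z N h (Id C N) = g"
  using exponentiable assms unfolding nno_exponentiable_def hom_def by blast

lemma curryN:
  assumes "dm g = Prod C Z N" "cd g = A"
  shows "dm (curryN C Z A g) = Z" "cd (curryN C Z A g) = Exp C A"
    "Ev C A \<cdot> cross C Z N (curryN C Z A g) (Id C N) = g"
  using theI'[OF curryN_ex1[OF assms]] unfolding curryN_def hom_def by blast+

lemmas dom_curryN [simp] = curryN(1) and cod_curryN [simp] = curryN(2)

lemma curryN_unique:
  assumes "dm h = Z" "cd h = Exp C A" "Ev C A \<cdot> cross C Z N h (Id C N) = g"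
  shows "h = curryN C Z A g"
proof -
  have "dm g = Prod C Z N" "cd g = A"
    using assms(1,2) by (simp_all add: assms(3)[symmetric])
  moreover have "h \<in> hom C Z (Exp C A) \<and> Ev C A \<cdot> cross C Z N h (Id C N) = g"
    using assms by (simp add: hom_def)
  ultimately show ?thesis
    unfolding curryN_def by (rule the1_equality[OF curryN_ex1, symmetric])
qed

lemma ev_curryN_comp [simp]:
  assumes "dm g = Prod C Z N" "cd g = A" "cd w = Z" "dm i = dm w" "cd i = N"
  shows "Ev C A \<cdot> Pair C (curryN C Z A g \<cdot> w) i = g \<cdot> Pair C w i"
proof -
  have "g \<cdot> Pair C w i = (Ev C A \<cdot> cross C Z N (curryN C Z A g) (Id C N)) \<cdot> Pair C w i"
    using curryN(3)[OF assms(1,2)] by simp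
  then show ?thesis using assms by simp
qed

lemma ev_curryN [simp]:
  "dm g = Prod C Z N \<Longrightarrow> cd g = A \<Longrightarrow> dm i = Z \<Longrightarrow> cd i = N \<Longrightarrow>
    Ev C A \<cdot> Pair C (curryN C Z A g) i = g \<cdot> Pair C (Id C Z) i"
  using ev_curryN_comp[of g Z A "Id C Z" i] by simp

lemma seq_ext:
  assumes "dm x = Z" "dm y = Z" "cd x = Exp C A" "cd y = Exp C A"
    and "\<And>w i. cd w = Z \<Longrightarrow> dm i = dm w \<Longrightarrow> cd i = N \<Longrightarrow>
      Ev C A \<cdot> Pair C (x \<cdot> w) i = Ev C A \<cdot> Pair C (y \<cdot> w) i"
  shows "x = y"
proof -
  have "x = curryN C Z A (Ev C A \<cdot> Pair C (x \<cdot> Pi1 C Z N) (Pi2 C Z N))"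
    "y = curryN C Z A (Ev C A \<cdot> Pair C (x \<cdot> Pi1 C Z N) (Pi2 C Z N))"
    using assms by (auto intro!: curryN_unique simp: cross_def)
  then show ?thesis by simp
qed

lemma shift_typ [simp]:
  "dm x = Z \<Longrightarrow> cd x = Exp C A \<Longrightarrow> dm (shift C Z A x) = Z"
  "dm x = Z \<Longrightarrow> cd x = Exp C A \<Longrightarrow> cd (shift C Z A x) = Exp C A"
  by (simp_all add: shift_def cross_def)

lemma ev_shift_comp [simp]:
  "dm x = Z \<Longrightarrow> cd x = Exp C A \<Longrightarrow> cd w = Z \<Longrightarrow> dm i = dm w \<Longrightarrow> cd i = N \<Longrightarrow>
    Ev C A \<cdot> Pair C (shift C Z A x \<cdot> w) i = Ev C A \<cdot> Pair C (x \<cdot> w) (Succ C \<cdot> i)"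
  unfolding shift_def by (subst ev_curryN_comp) (simp_all add: cross_def)

lemma ev_shift [simp]:
  "dm x = Z \<Longrightarrow> cd x = Exp C A \<Longrightarrow> dm i = Z \<Longrightarrow> cd i = N \<Longrightarrow>
    Ev C A \<cdot> Pair C (shift C Z A x) i = Ev C A \<cdot> Pair C x (Succ C \<cdot> i)"
  using ev_shift_comp[of x Z A "Id C Z" i] by simp

lemma map_seq_typ [simp]:
  "dm x = Z \<Longrightarrow> cd x = Exp C A \<Longrightarrow> dm f = A \<Longrightarrow> cd f = A' \<Longrightarrow> dm (map_seq C Z A A' f x) = Z"
  "dm x = Z \<Longrightarrow> cd x = Exp C A \<Longrightarrow> dm f = A \<Longrightarrow> cd f = A' \<Longrightarrow> cd (map_seq C Z A A' f x) = Exp C A'"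
  by (simp_all add: map_seq_def cross_def)

lemma ev_map_seq_comp [simp]:
  "dm x = Z \<Longrightarrow> cd x = Exp C A \<Longrightarrow> dm f = A \<Longrightarrow> cd f = A' \<Longrightarrow> cd w = Z \<Longrightarrow> dm i = dm w \<Longrightarrow> cd i = N \<Longrightarrow>
    Ev C A' \<cdot> Pair C (map_seq C Z A A' f x \<cdot> w) i = f \<cdot> Ev C A \<cdot> Pair C (x \<cdot> w) i"
  unfolding map_seq_def by (subst ev_curryN_comp) (simp_all add: cross_def)

abbreviation head where "head A \<equiv> Ev C A \<cdot> Pair C (Id C (Exp C A)) (zero (Exp C A))"
abbreviation tail where "tail A \<equiv> shift C (Exp C A) A (Id C (Exp C A))"

lemma tail_comp [simp]: "dm x = Z \<Longrightarrow> cd x = Exp C A \<Longrightarrow> tail A \<cdot> x = shift C Z A x"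
  by (rule seq_ext[where Z=Z and A=A]) auto

subsection \<open>Primitive recursion\<close>

definition is_prim_rec :: "'o \<Rightarrow> 'o \<Rightarrow> 'a \<Rightarrow> 'a \<Rightarrow> 'a \<Rightarrow> bool" where
  "is_prim_rec P X a f g \<longleftrightarrow> g \<in> hom C (Prod C P N) X \<and>
     (\<forall>W p. p \<in> hom C W P \<longrightarrow> g \<cdot> Pair C p (zero W) = a \<cdot> p) \<and>
     (\<forall>W p n. p \<in> hom C W P \<longrightarrow> n \<in> hom C W N \<longrightarrow>
        g \<cdot> Pair C p (Succ C \<cdot> n) = f \<cdot> Pair C p (g \<cdot> Pair C p n))"

lemma prim_rec_ex1:
  assumes "dm a = P" "cd a = X" "dm f = Prod C P X" "cd f = X"
  shows "\<exists>!g. is_prim_rec P X a f g"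
proof -
  have "\<forall>P X a f. a \<in> hom C P X \<longrightarrow> f \<in> hom C (Prod C P X) X \<longrightarrow> (\<exists>!g. is_prim_rec P X a f g)"
    using pnno unfolding is_pnno_def is_prim_rec_def by blast
  moreover have "a \<in> hom C P X" "f \<in> hom C (Prod C P X) X"
    using assms by (auto simp: hom_def)
  ultimately show ?thesis by blast
qed

definition prim_rec :: "'o \<Rightarrow> 'o \<Rightarrow> 'a \<Rightarrow> 'a \<Rightarrow> 'a" where
  "prim_rec P X a f = (THE g. is_prim_rec P X a f g)"

lemma is_prim_rec_prim_rec:
  "dm a = P \<Longrightarrow> cd a = X \<Longrightarrow> dm f = Prod C P X \<Longrightarrow> cd f = X \<Longrightarrow> is_prim_rec P X a f (prim_rec P X a f)"
  unfolding prim_rec_def by (rule theI'[OF prim_rec_ex1])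

lemma prim_rec_unique:
  "dm a = P \<Longrightarrow> cd a = X \<Longrightarrow> dm f = Prod C P X \<Longrightarrow> cd f = X \<Longrightarrow> is_prim_rec P X a f g \<Longrightarrow>
    g = prim_rec P X a f"
  unfolding prim_rec_def by (rule the1_equality[OF prim_rec_ex1, symmetric])

text \<open>orbit X h (p, n) = h^n p; with h = Succ this is addition.\<close>
definition orbit :: "'o \<Rightarrow> 'a \<Rightarrow> 'a" where
  "orbit X h = prim_rec X X (Id C X) (h \<cdot> Pi2 C X X)"

context
  fixes X h
  assumes h_typ [simp]: "dm h = X" "cd h = X"
begin

lemma is_prim_rec_orbit: "is_prim_rec X X (Id C X) (h \<cdot> Pi2 C X X) (orbit X h)"
  unfolding orbit_def by (intro is_prim_rec_prim_rec) auto

lemma orbit_typ [simp]: "dm (orbit X h) = Prod C X N" "cd (orbit X h) = X"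
  using is_prim_rec_orbit unfolding is_prim_rec_def hom_def by auto

lemma orbit_zero [simp]: "cd p = X \<Longrightarrow> dm p = W \<Longrightarrow> orbit X h \<cdot> Pair C p (zero W) = p"
  using is_prim_rec_orbit unfolding is_prim_rec_def hom_def by auto

lemma orbit_succ [simp]: "cd p = X \<Longrightarrow> cd n = N \<Longrightarrow> dm n = dm p \<Longrightarrow>
    orbit X h \<cdot> Pair C p (Succ C \<cdot> n) = h \<cdot> orbit X h \<cdot> Pair C p n"
  using is_prim_rec_orbit unfolding is_prim_rec_def hom_def by auto

lemma orbit_step [simp]:
  assumes "cd p = X" "cd n = N" "dm n = dm p"
  shows "orbit X h \<cdot> Pair C (h \<cdot> p) n = h \<cdot> orbit X h \<cdot> Pair C p n"
proof -
  have "orbit X h \<cdot> cross C X N h (Id C N) = prim_rec X X h (h \<cdot> Pi2 C X X)"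
    "orbit X h \<cdot> cross C X N (Id C X) (Succ C) = prim_rec X X h (h \<cdot> Pi2 C X X)"
    by (auto intro!: prim_rec_unique simp: is_prim_rec_def hom_def cross_def)
  then have "(orbit X h \<cdot> cross C X N h (Id C N)) \<cdot> Pair C p n
      = (orbit X h \<cdot> cross C X N (Id C X) (Succ C)) \<cdot> Pair C p n"
    by simp
  then show ?thesis using assms by (simp add: cross_def)
qed

end

abbreviation plusN where "plusN \<equiv> orbit N (Succ C)"

lemma plusN_zero_left [simp]:
  assumes "cd n = N" "dm n = W"
  shows "plusN \<cdot> Pair C (zero W) n = n"
proof -
  let ?g = "plusN \<cdot> Pair C (Zero C \<cdot> Pi1 C (Trm C) N) (Pi2 C (Trm C) N)"
  have global_element: "\<exists>V. p = Bang C V" if "cd p = Trm C" for p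
    using bang_unique[OF that] by blast
  have "?g = prim_rec (Trm C) N (Zero C) (Succ C \<cdot> Pi2 C (Trm C) N)"
    "Pi2 C (Trm C) N = prim_rec (Trm C) N (Zero C) (Succ C \<cdot> Pi2 C (Trm C) N)"
    by (auto intro!: prim_rec_unique simp: is_prim_rec_def hom_def dest!: global_element)
  then have "?g \<cdot> Pair C (Bang C W) n = Pi2 C (Trm C) N \<cdot> Pair C (Bang C W) n"
    by simp
  then show ?thesis using assms by simp
qed

text \<open>The sequence of suffixes of x: (z, n) \<mapsto> (x_(n+i) z)_i.\<close>
definition suffixes :: "'o \<Rightarrow> 'o \<Rightarrow> 'a \<Rightarrow> 'a" where
  "suffixes Z A x = curryN C (Prod C Z N) A
     (Ev C A \<cdot> Pair C (x \<cdot> Pi1 C Z N \<cdot> Pi1 C (Prod C Z N) N)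
                   (plusN \<cdot> Pair C (Pi2 C Z N \<cdot> Pi1 C (Prod C Z N) N) (Pi2 C (Prod C Z N) N)))"

context
  fixes Z A x
  assumes x_typ [simp]: "dm x = Z" "cd x = Exp C A"
begin

lemma suffixes_typ [simp]: "dm (suffixes Z A x) = Prod C Z N" "cd (suffixes Z A x) = Exp C A"
  by (simp_all add: suffixes_def)

lemma ev_suffixes_comp [simp]:
  "cd w = Prod C Z N \<Longrightarrow> dm j = dm w \<Longrightarrow> cd j = N \<Longrightarrow>
    Ev C A \<cdot> Pair C (suffixes Z A x \<cdot> w) j
    = Ev C A \<cdot> Pair C (x \<cdot> Pi1 C Z N \<cdot> w) (plusN \<cdot> Pair C (Pi2 C Z N \<cdot> w) j)"
  by (simp add: suffixes_def)

lemma ev_suffixes_zero: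
  "Ev C A \<cdot> Pair C (suffixes Z A x) (zero (Prod C Z N)) = Ev C A \<cdot> Pair C (x \<cdot> Pi1 C Z N) (Pi2 C Z N)"
  by (simp add: suffixes_def)

lemma shift_suffixes:
  "shift C (Prod C Z N) A (suffixes Z A x) = suffixes Z A x \<cdot> cross C Z N (Id C Z) (Succ C)"
  by (rule seq_ext[where Z="Prod C Z N" and A=A]) (auto simp: cross_def)

lemma suffixes_zero: "suffixes Z A x \<cdot> Pair C (Id C Z) (zero Z) = x"
  by (rule seq_ext[where Z=Z and A=A]) auto

end

text \<open>u = m \<circ> (id \<times> u) \<circ> \<langle>c1, c2\<rangle>, the equation in the definition of iterativity.\<close>
definition iteration_solution :: "'a \<Rightarrow> 'a \<Rightarrow> 'a \<Rightarrow> 'a \<Rightarrow> bool" where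
  "iteration_solution m c1 c2 u \<longleftrightarrow> dm u = dm c2 \<and> cd u = cd c1 \<and> m \<cdot> Pair C c1 (u \<cdot> c2) = u"

lemma iterative_iff_iteration_solution_ex1:
  assumes m_typ: "dm m = Prod C A A" "cd m = A"
  shows "iterative C A m \<longleftrightarrow>
    (\<forall>c1 c2. dm c1 = dm c2 \<longrightarrow> cd c1 = A \<longrightarrow> cd c2 = dm c2 \<longrightarrow> (\<exists>!u. iteration_solution m c1 c2 u))"
proof -
  have solution_iff: "(u \<in> hom C (dm c2) A \<and> m \<cdot> (cross C A (dm c2) (Id C A) u \<cdot> Pair C c1 c2) = u)
      \<longleftrightarrow> iteration_solution m c1 c2 u"
    if "dm c1 = dm c2" "cd c1 = A" "cd c2 = dm c2" for c1 c2 u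
    using that by (auto simp: hom_def iteration_solution_def)
  show ?thesis
  proof
    assume iterative: "iterative C A m"
    show "\<forall>c1 c2. dm c1 = dm c2 \<longrightarrow> cd c1 = A \<longrightarrow> cd c2 = dm c2 \<longrightarrow> (\<exists>!u. iteration_solution m c1 c2 u)"
    proof (intro allI impI)
      fix c1 c2 assume c: "dm c1 = dm c2" "cd c1 = A" "cd c2 = dm c2"
      then have "Pair C c1 c2 \<in> hom C (dm c2) (Prod C A (dm c2))"
        by (simp add: hom_def)
      with iterative
      have "\<exists>!u. u \<in> hom C (dm c2) A \<and> m \<cdot> (cross C A (dm c2) (Id C A) u \<cdot> Pair C c1 c2) = u"
        unfolding iterative_def by blast
      then show "\<exists>!u. iteration_solution m c1 c2 u"
        using solution_iff[OF c] by simp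
    qed
  next
    assume solutions: "\<forall>c1 c2. dm c1 = dm c2 \<longrightarrow> cd c1 = A \<longrightarrow> cd c2 = dm c2 \<longrightarrow>
      (\<exists>!u. iteration_solution m c1 c2 u)"
    show "iterative C A m"
      unfolding iterative_def
    proof (intro allI impI)
      fix X c assume c: "c \<in> hom C X (Prod C A X)"
      then have "c = Pair C (Pi1 C A X \<cdot> c) (Pi2 C A X \<cdot> c)"
        by (simp add: hom_def pair_eta)
      with c solutions show "\<exists>!u. u \<in> hom C X A \<and> m \<cdot> (cross C A X (Id C A) u \<cdot> c) = u"
        using solution_iff[of "Pi1 C A X \<cdot> c" "Pi2 C A X \<cdot> c"] by (simp add: hom_def)
    qed
  qed
qed

lemma iteration_solution_unique:
  assumes "iterative C A m" "dm m = Prod C A A" "cd m = A"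
    and "dm c1 = dm c2" "cd c1 = A" "cd c2 = dm c2"
    and "iteration_solution m c1 c2 u" "iteration_solution m c1 c2 v"
  shows "u = v"
  using assms iterative_iff_iteration_solution_ex1 by blast

lemma iteration_solution_comp:
  assumes "iteration_solution m c1 c2 u" "dm m = Prod C (cd c1) (cd c1)"
    and "dm c1 = dm c2" "cd c2 = dm c2" "cd s = dm c2" "dm d2 = dm s" "cd d2 = dm s"
    and "c1 \<cdot> s = d1" "c2 \<cdot> s = s \<cdot> d2"
  shows "iteration_solution m d1 d2 (u \<cdot> s)"
proof -
  have u_typ: "dm u = dm c2" "cd u = cd c1" and u_eq: "m \<cdot> Pair C c1 (u \<cdot> c2) = u"
    using assms(1) unfolding iteration_solution_def by blast+
  have "u \<cdot> s = (m \<cdot> Pair C c1 (u \<cdot> c2)) \<cdot> s" by (simp only: u_eq)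
  also have "\<dots> = m \<cdot> Pair C (c1 \<cdot> s) (u \<cdot> (c2 \<cdot> s))"
    using assms(2-5) u_typ by simp
  also have "\<dots> = m \<cdot> Pair C d1 ((u \<cdot> s) \<cdot> d2)"
    using assms(5-7) u_typ by (simp add: assms(8,9))
  finally have "m \<cdot> Pair C d1 ((u \<cdot> s) \<cdot> d2) = u \<cdot> s" ..
  moreover have "dm (u \<cdot> s) = dm d2" "cd (u \<cdot> s) = cd d1"
    using assms(3-7) u_typ by (simp_all flip: assms(8))
  ultimately show ?thesis
    unfolding iteration_solution_def by blast
qed

subsection \<open>Unfolding and canonicity\<close>

context
  fixes A m M
  assumes m_typ [simp]: "dm m = Prod C A A" "cd m = A"
    and M_typ [simp]: "dm M = Exp C A" "cd M = A"
begin

lemma unfolding_law_iff_iteration_solution: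
  "unfolding_law C A m M \<longleftrightarrow> iteration_solution m (head A) (tail A) M"
proof
  assume "unfolding_law C A m M"
  then have "Id C (Exp C A) \<in> hom C (Exp C A) (Exp C A) \<longrightarrow> M \<cdot> Id C (Exp C A)
      = m \<cdot> Pair C (head A) (M \<cdot> tail A)"
    unfolding unfolding_law_def seq_at_def by blast
  then show "iteration_solution m (head A) (tail A) M"
    by (simp add: iteration_solution_def hom_def)
next
  assume "iteration_solution m (head A) (tail A) M"
  then have M_eq: "m \<cdot> Pair C (head A) (M \<cdot> tail A) = M"
    by (simp add: iteration_solution_def)
  show "unfolding_law C A m M"
    unfolding unfolding_law_def seq_at_def hom_def
  proof (intro allI impI)
    fix Z x assume x: "x \<in> {f. dm f = Z \<and> cd f = Exp C A}"
    have "M \<cdot> x = (m \<cdot> Pair C (head A) (M \<cdot> tail A)) \<cdot> x" by (simp only: M_eq)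
    also have "\<dots> = m \<cdot> Pair C (head A \<cdot> x) (M \<cdot> (tail A \<cdot> x))" using x by simp
    finally show "M \<cdot> x = m \<cdot> Pair C (Ev C A \<cdot> Pair C x (zero Z)) (M \<cdot> shift C Z A x)"
      using x by simp
  qed
qed

lemma canonicityI:
  assumes "\<And>Z x y. dm x = Z \<Longrightarrow> cd x = Exp C A \<Longrightarrow> dm y = Z \<Longrightarrow> cd y = Exp C A \<Longrightarrow>
    (\<And>w i. cd w = Z \<Longrightarrow> dm i = dm w \<Longrightarrow> cd i = N \<Longrightarrow>
      Ev C A \<cdot> Pair C (y \<cdot> w) i
      = m \<cdot> Pair C (Ev C A \<cdot> Pair C (x \<cdot> w) i) (Ev C A \<cdot> Pair C (y \<cdot> w) (Succ C \<cdot> i))) \<Longrightarrow>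
    Ev C A \<cdot> Pair C y (zero Z) = M \<cdot> x"
  shows "canonicity C A m M"
  unfolding canonicity_def seq_at_def hom_def using assms by simp

lemma canonicityD:
  assumes "canonicity C A m M" "dm x = Z" "cd x = Exp C A" "dm y = Z" "cd y = Exp C A"
    and "\<And>w i. cd w = Z \<Longrightarrow> dm i = dm w \<Longrightarrow> cd i = N \<Longrightarrow>
      Ev C A \<cdot> Pair C (y \<cdot> w) i
      = m \<cdot> Pair C (Ev C A \<cdot> Pair C (x \<cdot> w) i) (Ev C A \<cdot> Pair C (y \<cdot> w) (Succ C \<cdot> i))"
  shows "Ev C A \<cdot> Pair C y (zero Z) = M \<cdot> x"
proof -
  have "\<forall>W w i. dm w = W \<and> cd w = Z \<longrightarrow> dm i = W \<and> cd i = N \<longrightarrow>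
      Ev C A \<cdot> Pair C (y \<cdot> w) i
      = m \<cdot> Pair C (Ev C A \<cdot> Pair C (x \<cdot> w) i) (Ev C A \<cdot> Pair C (y \<cdot> w) (Succ C \<cdot> i))"
    by (intro allI impI, elim conjE) (rule assms(6); simp)
  then show ?thesis
    using assms(1-5) unfolding canonicity_def seq_at_def hom_def mem_Collect_eq by blast
qed

lemma iterative_canonicity:
  assumes "iterative C A m" "unfolding_law C A m M"
  shows "canonicity C A m M"
proof (rule canonicityI)
  fix Z x y
  assume x_typ [simp]: "dm x = Z" "cd x = Exp C A" and y_typ [simp]: "dm y = Z" "cd y = Exp C A"
    and step: "\<And>w i. cd w = Z \<Longrightarrow> dm i = dm w \<Longrightarrow> cd i = N \<Longrightarrow>
      Ev C A \<cdot> Pair C (y \<cdot> w) i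
      = m \<cdot> Pair C (Ev C A \<cdot> Pair C (x \<cdot> w) i) (Ev C A \<cdot> Pair C (y \<cdot> w) (Succ C \<cdot> i))"
  let ?c1 = "Ev C A \<cdot> Pair C (x \<cdot> Pi1 C Z N) (Pi2 C Z N)"
  let ?c2 = "cross C Z N (Id C Z) (Succ C)"
  let ?u = "Ev C A \<cdot> Pair C (y \<cdot> Pi1 C Z N) (Pi2 C Z N)"
  have "?u \<cdot> ?c2 = Ev C A \<cdot> Pair C (y \<cdot> Pi1 C Z N) (Succ C \<cdot> Pi2 C Z N)"
    by (simp add: cross_def)
  then have "m \<cdot> Pair C ?c1 (?u \<cdot> ?c2) = ?u"
    by (simp only:) (rule step[symmetric]; simp)
  then have "iteration_solution m ?c1 ?c2 ?u"
    by (simp add: iteration_solution_def cross_def)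
  moreover have "iteration_solution m ?c1 ?c2 (M \<cdot> suffixes Z A x)"
    using assms(2) unfolding unfolding_law_iff_iteration_solution
    by (rule iteration_solution_comp) (simp_all add: ev_suffixes_zero shift_suffixes)
  ultimately have "?u = M \<cdot> suffixes Z A x"
    using assms(1) by (intro iteration_solution_unique[of A m ?c1 ?c2]) (simp_all add: cross_def)
  then have "?u \<cdot> Pair C (Id C Z) (zero Z) = M \<cdot> (suffixes Z A x \<cdot> Pair C (Id C Z) (zero Z))"
    by simp
  then show "Ev C A \<cdot> Pair C y (zero Z) = M \<cdot> x"
    by (simp add: suffixes_zero)
qed

lemma unfolding_canonicity_iterative:
  assumes "unfolding_law C A m M" "canonicity C A m M"
  shows "iterative C A m"
  unfolding iterative_iff_iteration_solution_ex1[OF m_typ]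
proof (intro allI impI)
  fix c1 c2 assume c_typ [simp]: "dm c1 = dm c2" "cd c1 = A" "cd c2 = dm c2"
  define X where "X = dm c2"
  have [simp]: "dm c2 = X" "cd c2 = X" "dm c1 = X" by (simp_all add: X_def)
  define s where "s = curryN C X A (c1 \<cdot> orbit X c2)"
  have s_typ [simp]: "dm s = X" "cd s = Exp C A" by (simp_all add: s_def)
  have ev_s [simp]: "Ev C A \<cdot> Pair C (s \<cdot> w) j = c1 \<cdot> orbit X c2 \<cdot> Pair C w j"
    if "cd w = X" "dm j = dm w" "cd j = N" for w j
    using that by (simp add: s_def)
  have ev_s_zero: "Ev C A \<cdot> Pair C s (zero X) = c1" by (simp add: s_def)
  have shift_s: "shift C X A s = s \<cdot> c2"
    by (rule seq_ext[where Z=X and A=A]) auto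
  show "\<exists>!u. iteration_solution m c1 c2 u"
  proof (rule ex1I)
    show "iteration_solution m c1 c2 (M \<cdot> s)"
      using assms(1) unfolding unfolding_law_iff_iteration_solution
      by (rule iteration_solution_comp) (simp_all add: ev_s_zero shift_s)
  next
    fix u assume "iteration_solution m c1 c2 u"
    then have u_typ [simp]: "dm u = X" "cd u = A" and u_eq: "m \<cdot> Pair C c1 (u \<cdot> c2) = u"
      by (simp_all add: iteration_solution_def)
    have u_comp: "u \<cdot> q = m \<cdot> Pair C (c1 \<cdot> q) (u \<cdot> c2 \<cdot> q)" if "cd q = X" for q
    proof -
      have "u \<cdot> q = (m \<cdot> Pair C c1 (u \<cdot> c2)) \<cdot> q" by (simp only: u_eq)
      then show ?thesis using that by simp
    qed
    define y where "y = curryN C X A (u \<cdot> orbit X c2)"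
    have y_typ [simp]: "dm y = X" "cd y = Exp C A" by (simp_all add: y_def)
    have "Ev C A \<cdot> Pair C y (zero X) = M \<cdot> s"
      using assms(2) s_typ y_typ
    proof (rule canonicityD)
      fix w i assume "cd w = X" "dm i = dm w" "cd i = N"
      then show "Ev C A \<cdot> Pair C (y \<cdot> w) i
        = m \<cdot> Pair C (Ev C A \<cdot> Pair C (s \<cdot> w) i) (Ev C A \<cdot> Pair C (y \<cdot> w) (Succ C \<cdot> i))"
        using u_comp[of "orbit X c2 \<cdot> Pair C w i"] by (simp add: y_def)
    qed
    moreover have "Ev C A \<cdot> Pair C y (zero X) = u" by (simp add: y_def)
    ultimately show "u = M \<cdot> s" by simp
  qed
qed

end

lemma iterative_unfolding_law_ex1:
  assumes "dm m = Prod C A A" "cd m = A" "iterative C A m"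
  shows "\<exists>!M. M \<in> hom C (Exp C A) A \<and> unfolding_law C A m M"
proof -
  have "\<exists>!M. iteration_solution m (head A) (tail A) M"
    using assms iterative_iff_iteration_solution_ex1 by simp
  moreover have "M \<in> hom C (Exp C A) A \<and> unfolding_law C A m M \<longleftrightarrow> iteration_solution m (head A) (tail A) M"
    for M
    using unfolding_law_iff_iteration_solution[where A=A and m=m and M=M] assms
    by (auto simp: hom_def iteration_solution_def)
  ultimately show ?thesis by simp
qed

lemma iterative_iff_unfolding_canonicity:
  assumes "dm m = Prod C A A" "cd m = A"
  shows "iterative C A m \<longleftrightarrow>
    (\<exists>M. M \<in> hom C (Exp C A) A \<and> unfolding_law C A m M \<and> canonicity C A m M)"
proof
  assume iterative: "iterative C A m"
  then obtain M where "M \<in> hom C (Exp C A) A" "unfolding_law C A m M"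
    using iterative_unfolding_law_ex1 assms by blast
  with iterative show "\<exists>M. M \<in> hom C (Exp C A) A \<and> unfolding_law C A m M \<and> canonicity C A m M"
    using iterative_canonicity assms by (auto simp: hom_def)
qed (use unfolding_canonicity_iterative assms in \<open>auto simp: hom_def\<close>)

lemma midpoint_hom_commutes_unfolding_maps:
  assumes m_typ: "dm m = Prod C A A" "cd m = A" and M_typ: "dm M = Exp C A" "cd M = A"
    and m'_typ: "dm m' = Prod C A' A'" "cd m' = A'" and M'_typ: "dm M' = Exp C A'" "cd M' = A'"
    and "iterative C A' m'" "unfolding_law C A m M" "unfolding_law C A' m' M'"
    and f: "midpoint_hom C A m A' m' f" and x_typ: "dm x = Z" "cd x = Exp C A"
  shows "f \<cdot> (M \<cdot> x) = M' \<cdot> map_seq C Z A A' f x"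
proof -
  have f_typ [simp]: "dm f = A" "cd f = A'"
    using f unfolding midpoint_hom_def hom_def by auto
  have f_hom: "f \<cdot> (m \<cdot> Pair C p q) = m' \<cdot> Pair C (f \<cdot> p) (f \<cdot> q)"
    if "cd p = A" "cd q = A" "dm p = dm q" for p q
    using f that unfolding midpoint_hom_def hom_def by auto
  define G where "G = map_seq C (Exp C A) A A' f (Id C (Exp C A))"
  have G_typ [simp]: "dm G = Exp C A" "cd G = Exp C A'" by (simp_all add: G_def)
  have ev_G [simp]: "Ev C A' \<cdot> Pair C (G \<cdot> w) j = f \<cdot> Ev C A \<cdot> Pair C w j"
    if "cd w = Exp C A" "dm j = dm w" "cd j = N" for w j
    using that ev_map_seq_comp[of "Id C (Exp C A)" "Exp C A" A f A' w j] by (simp add: G_def)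
  have ev_G_zero: "Ev C A' \<cdot> Pair C G (zero (Exp C A)) = f \<cdot> head A"
    using ev_G[of "Id C (Exp C A)" "zero (Exp C A)"] by simp
  have "iteration_solution m (head A) (tail A) M"
    using assms(10) m_typ M_typ unfolding_law_iff_iteration_solution by blast
  then have M_eq: "m \<cdot> Pair C (head A) (M \<cdot> tail A) = M"
    by (simp add: iteration_solution_def)
  have "f \<cdot> M = f \<cdot> (m \<cdot> Pair C (head A) (M \<cdot> tail A))" by (simp only: M_eq)
  also have "\<dots> = m' \<cdot> Pair C (f \<cdot> head A) ((f \<cdot> M) \<cdot> tail A)"
    using f_hom[of "head A" "M \<cdot> tail A"] M_typ by simp
  finally have "m' \<cdot> Pair C (f \<cdot> head A) ((f \<cdot> M) \<cdot> tail A) = f \<cdot> M" ..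
  then have "iteration_solution m' (f \<cdot> head A) (tail A) (f \<cdot> M)"
    unfolding iteration_solution_def using M_typ by simp
  moreover have "iteration_solution m' (f \<cdot> head A) (tail A) (M' \<cdot> G)"
  proof (rule iteration_solution_comp)
    show "iteration_solution m' (head A') (tail A') M'"
      using assms(11) m'_typ M'_typ unfolding_law_iff_iteration_solution by blast
    show "tail A' \<cdot> G = G \<cdot> tail A"
      by (rule seq_ext[where Z="Exp C A" and A=A']) auto
  qed (simp_all add: m'_typ ev_G_zero)
  ultimately have "f \<cdot> M = M' \<cdot> G"
    using assms(9) m'_typ by (intro iteration_solution_unique[of A' m' "f \<cdot> head A" "tail A"]) simp_all
  moreover have "G \<cdot> x = map_seq C Z A A' f x"
    by (rule seq_ext[where Z=Z and A=A']) (use x_typ in auto)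
  ultimately show ?thesis
    using x_typ M_typ M'_typ comp_assoc[of x M f] comp_assoc[of x G M'] by simp
qed

end

theorem mainTheorem1:
  fixes C :: "('o, 'a) ccat"
  assumes "cat_with_exp_pnno C"
  shows "(\<forall>A m. midpoint_obj C A m \<longrightarrow>
            ((iterative C A m \<longleftrightarrow>
               (\<exists>M. M \<in> hom C (Exp C A) A \<and> unfolding_law C A m M \<and> canonicity C A m M)) \<and>
             (iterative C A m \<longrightarrow> (\<exists>!M. M \<in> hom C (Exp C A) A \<and> unfolding_law C A m M))))
       \<and> (\<forall>A m A' m' M M' f.
            midpoint_obj C A m \<longrightarrow> iterative C A m \<longrightarrow>
            midpoint_obj C A' m' \<longrightarrow> iterative C A' m' \<longrightarrow>
            M \<in> hom C (Exp C A) A \<longrightarrow> unfolding_law C A m M \<longrightarrow>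
            M' \<in> hom C (Exp C A') A' \<longrightarrow> unfolding_law C A' m' M' \<longrightarrow>
            midpoint_hom C A m A' m' f \<longrightarrow>
            (\<forall>Z x. x \<in> hom C Z (Exp C A) \<longrightarrow>
               Comp C f (Comp C M x) = Comp C M' (map_seq C Z A A' f x)))"
proof -
  interpret exp_pnno_category C by unfold_locales (rule assms)
  have m_typ: "dm m = Prod C A A" "cd m = A" if "midpoint_obj C A m" for A m
    using that unfolding midpoint_obj_def hom_def by auto
  show ?thesis
  proof (intro conjI allI impI)
    fix A m assume "midpoint_obj C A m"
    note m = m_typ[OF this]
    show "iterative C A m \<longleftrightarrow>
        (\<exists>M. M \<in> hom C (Exp C A) A \<and> unfolding_law C A m M \<and> canonicity C A m M)"
      by (rule iterative_iff_unfolding_canonicity[OF m])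
    show "\<exists>!M. M \<in> hom C (Exp C A) A \<and> unfolding_law C A m M" if "iterative C A m"
      by (rule iterative_unfolding_law_ex1[OF m that])
  next
    fix A m A' m' M M' f Z x
    assume "midpoint_obj C A m" "iterative C A m" "midpoint_obj C A' m'" "iterative C A' m'"
      "M \<in> hom C (Exp C A) A" "unfolding_law C A m M"
      "M' \<in> hom C (Exp C A') A'" "unfolding_law C A' m' M'"
      "midpoint_hom C A m A' m' f" "x \<in> hom C Z (Exp C A)"
    then show "f \<cdot> (M \<cdot> x) = M' \<cdot> map_seq C Z A A' f x"
      using m_typ by (intro midpoint_hom_commutes_unfolding_maps[where A=A and A'=A' and m=m and m'=m'])
        (auto simp: hom_def)
  qed
qed

end
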